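(* Assume the well-posedness and controllability assumptions below. For $\theta\in\mathcal{N}$ define $\ell_N(\theta):=\mathbb{E}\big[\ell(x_s^{\mathrm{bet}(\theta_{N-1})},\bar u_s^{\mathrm{bet}(\theta_{N-1}),\theta_N},\theta_N)\mid\theta_0=\theta\big]$, and for the closed-loop system $x_{k+1}=f(x_k,\kappa_N(x_k,\theta_k),\theta_k)$ define $\mathcal{L}V_N^\star(x_k,\theta_k):=\mathbb{E}[V_N^\star(x_{k+1},\theta_{k+1})-V_N^\star(x_k,\theta_k)\mid\mathfrak{F}_k]$. Then for all $(x_k,\theta_k)\in X_N$, $$\mathcal{L}V_N^\star(x_k,\theta_k)\le \ell_N(\theta_k)-\ell(x_k,\kappa_N(x_k,\theta_k),\theta_k).$$
   Context: Let $\mathcal{N}=\{1,\dots,\nu\}$ and let $\{\theta_k\}_{k\ge 0}$ be a time-homogeneous Markov chain on $\mathcal{N}$ with transition matrix $P=(p_{ij})$ and initial distribution $v$, defined on a filtered probability space $(\Omega,\mathfrak{F},\{\mathfrak{F}_k\}_k,\mathbb{P})$, where $\mathfrak{F}_k$ is the $\sigma$-algebra generated by the history of states, inputs and modes up to time $k$. The system is $x_{k+1}=f(x_k,u_k,\theta_k)$ with $x_k\in\mathbb{R}^n$, $u_k\in\mathbb{R}^m$; at time $k$ both $x_k$ and $\theta_k$ are measured. Constraints: $(x_k,u_k)\in Y_{\theta_k}$. Stage cost $\ell:\mathbb{R}^n\times\mathbb{R}^m\times\mathcal{N}\to\mathbb{R}$. $u\lhd\mathfrak{F}_k$ means $u$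 is $\mathfrak{F}_k$-measurable. Cover: $\mathcal{C}(i)=\{j: p_{ij}>0\}$; bet node: some $\mathrm{bet}(i)\in\mathcal{C}(i)$ with $p_{i\,\mathrm{bet}(i)}\ge p_{ij}$ for all $j\in\mathcal{C}(i)$. Well-posedness assumption: for each $\theta$, $\ell(\cdot,\cdot,\theta)$ is nonnegative, lower semicontinuous and level-bounded in $u$ locally uniformly in $x$; $f(\cdot,\cdot,\theta)$ is continuous; $Y_\theta$ is nonempty and compact; $\{\theta_k\}$ is irreducible and aperiodic. Optimal steady states: $(x_s^\theta,u_s^\theta)$ minimizes $\ell(x,u,\theta)$ subject to $f(x,u,\theta)=x$, $(x,u)\in Y_\theta$. Controllability assumption: for all $i,j\in\mathcal{N}$ there is $\bar u_s^{i,j}$ with $(x_s^i,\bar u_s^{i,j})\in Y_j$ and $f(x_s^i,\bar u_s^{i,j},j)=x_s^{\mathrm{bet}(j)}$. EMPC problem $\mathbb{P}(x,\theta)$: $V_N^\star(x,\theta)=\inf_{\mathbf{u}_N}\mathbb{E}[\sum_{j=0}^{N-1}\ell(x_j,u_j,\theta_j)\mid\mathfrak{F}_0]$ subject to, for $k=0,\dots,N-1$: $x_{k+1}=f(x_k,u_k,\theta_k)$, $(x_k,u_k)\in Y_{\theta_k}$, $(x_0,\theta_0)=(x,\theta)$, $x_N=x_s^{\mathrm{bet}(\theta_{N-1})}$, $u_k\lhd\mathfrak{F}_k$. $X_N$ is the set of $(x,\theta)$ for which it is feasible; $\kappa_N(x,\theta)=u_0^\star(x,\theta)$ is the first element of an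 optimal policy. *)

theory Defs
  imports "HOL-Analysis.Analysis"
begin

(* Modes: a finite type 'q (playing the role of N = {1..nu}).
   Transition matrix P :: 'q => 'q => real, P i j = p_ij. *)

definition stochastic_matrix :: "('q::finite \<Rightarrow> 'q \<Rightarrow> real) \<Rightarrow> bool" where
  "stochastic_matrix P \<longleftrightarrow> (\<forall>i j. 0 \<le> P i j) \<and> (\<forall>i. (\<Sum>j\<in>UNIV. P i j) = 1)"

fun mpow :: "('q::finite \<Rightarrow> 'q \<Rightarrow> real) \<Rightarrow> nat \<Rightarrow> 'q \<Rightarrow> 'q \<Rightarrow> real" where
  "mpow P 0 i j = (if i = j then 1 else 0)"
| "mpow P (Suc n) i j = (\<Sum>k\<in>UNIV. mpow P n i k * P k j)"

definition irreducible_chain :: "('q::finite \<Rightarrow> 'q \<Rightarrow> real) \<Rightarrow> bool" where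
  "irreducible_chain P \<longleftrightarrow> (\<forall>i j. \<exists>n. mpow P n i j > 0)"

definition aperiodic_chain :: "('q::finite \<Rightarrow> 'q \<Rightarrow> real) \<Rightarrow> bool" where
  "aperiodic_chain P \<longleftrightarrow> (\<forall>i. Gcd {n. n \<ge> 1 \<and> mpow P n i i > 0} = 1)"

definition cover :: "('q \<Rightarrow> 'q \<Rightarrow> real) \<Rightarrow> 'q \<Rightarrow> 'q set" where
  "cover P i = {j. P i j > 0}"

definition is_bet :: "('q \<Rightarrow> 'q \<Rightarrow> real) \<Rightarrow> ('q \<Rightarrow> 'q) \<Rightarrow> bool" where
  "is_bet P bet \<longleftrightarrow> (\<forall>i. bet i \<in> cover P i \<and> (\<forall>j\<in>cover P i. P i j \<le> P i (bet i)))"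

definition lsc :: "('a::topological_space \<Rightarrow> real) \<Rightarrow> bool" where
  "lsc g \<longleftrightarrow> (\<forall>z0 a. a < g z0 \<longrightarrow> eventually (\<lambda>z. a < g z) (nhds z0))"

(* level-boundedness in u locally uniformly in x (Rockafellar--Wets, Def. 1.16) *)
definition level_bounded_loc_unif ::
  "('x::metric_space \<Rightarrow> 'u::metric_space \<Rightarrow> real) \<Rightarrow> bool" where
  "level_bounded_loc_unif g \<longleftrightarrow>
     (\<forall>x0 a. \<exists>V. open V \<and> x0 \<in> V \<and> bounded (\<Union>x\<in>V. {u. g x u \<le> a}))"

definition well_posed ::
  "('q::finite \<Rightarrow> 'q \<Rightarrow> real) \<Rightarrow> ('x::metric_space \<Rightarrow> 'u::metric_space \<Rightarrow> 'q \<Rightarrow> 'x)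
   \<Rightarrow> ('x \<Rightarrow> 'u \<Rightarrow> 'q \<Rightarrow> real) \<Rightarrow> ('q \<Rightarrow> ('x \<times> 'u) set) \<Rightarrow> bool" where
  "well_posed P f ell Y \<longleftrightarrow>
     (\<forall>\<theta>. (\<forall>x u. 0 \<le> ell x u \<theta>)
        \<and> lsc (\<lambda>(x, u). ell x u \<theta>)
        \<and> level_bounded_loc_unif (\<lambda>x u. ell x u \<theta>)
        \<and> continuous_on UNIV (\<lambda>(x, u). f x u \<theta>)
        \<and> Y \<theta> \<noteq> {} \<and> compact (Y \<theta>))
     \<and> irreducible_chain P \<and> aperiodic_chain P"

definition optimal_steady_states ::
  "('x \<Rightarrow> 'u \<Rightarrow> 'q \<Rightarrow> 'x) \<Rightarrow> ('x \<Rightarrow> 'u \<Rightarrow> 'q \<Rightarrow> real) \<Rightarrow> ('q \<Rightarrow> ('x \<times> 'u) set)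
   \<Rightarrow> ('q \<Rightarrow> 'x) \<Rightarrow> ('q \<Rightarrow> 'u) \<Rightarrow> bool" where
  "optimal_steady_states f ell Y xs us \<longleftrightarrow>
     (\<forall>\<theta>. f (xs \<theta>) (us \<theta>) \<theta> = xs \<theta> \<and> (xs \<theta>, us \<theta>) \<in> Y \<theta> \<and>
        (\<forall>x u. f x u \<theta> = x \<and> (x, u) \<in> Y \<theta> \<longrightarrow> ell (xs \<theta>) (us \<theta>) \<theta> \<le> ell x u \<theta>))"

definition controllable ::
  "('x \<Rightarrow> 'u \<Rightarrow> 'q \<Rightarrow> 'x) \<Rightarrow> ('q \<Rightarrow> ('x \<times> 'u) set) \<Rightarrow> ('q \<Rightarrow> 'q)
   \<Rightarrow> ('q \<Rightarrow> 'x) \<Rightarrow> ('q \<Rightarrow> 'q \<Rightarrow> 'u) \<Rightarrow> bool" where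
  "controllable f Y bet xs ubar \<longleftrightarrow>
     (\<forall>i j. (xs i, ubar i j) \<in> Y j \<and> f (xs i) (ubar i j) j = xs (bet j))"

definition paths :: "'q \<Rightarrow> nat \<Rightarrow> 'q list set" where
  "paths \<theta> n = {ws. length ws = n \<and> ws ! 0 = \<theta>}"

definition path_prob :: "('q \<Rightarrow> 'q \<Rightarrow> real) \<Rightarrow> 'q list \<Rightarrow> real" where
  "path_prob P ws = (\<Prod>k<length ws - 1. P (ws ! k) (ws ! Suc k))"

(* A policy mu maps a mode history [theta_0,...,theta_k] to the input u_k; this is
   exactly an F_k-measurable input (x_0 is given and states/inputs are determined by
   the mode history).  state f x mu ws k = x_k along the mode path ws. *)
fun state :: "('x \<Rightarrow> 'u \<Rightarrow> 'q \<Rightarrow> 'x) \<Rightarrow> 'x \<Rightarrow> ('q list \<Rightarrow> 'u) \<Rightarrow> 'q list \<Rightarrow> nat \<Rightarrow> 'x" where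
  "state f x mu ws 0 = x"
| "state f x mu ws (Suc k) = f (state f x mu ws k) (mu (take (Suc k) ws)) (ws ! k)"

(* feasibility for P(x,theta): constraints and terminal constraint hold almost surely,
   i.e. along every mode path of positive probability *)
definition feasible ::
  "('q \<Rightarrow> 'q \<Rightarrow> real) \<Rightarrow> ('x \<Rightarrow> 'u \<Rightarrow> 'q \<Rightarrow> 'x) \<Rightarrow> ('q \<Rightarrow> ('x \<times> 'u) set) \<Rightarrow> ('q \<Rightarrow> 'q)
   \<Rightarrow> ('q \<Rightarrow> 'x) \<Rightarrow> nat \<Rightarrow> 'x \<Rightarrow> 'q \<Rightarrow> ('q list \<Rightarrow> 'u) \<Rightarrow> bool" where
  "feasible P f Y bet xs N x \<theta> mu \<longleftrightarrow>
     (\<forall>ws\<in>paths \<theta> N. path_prob P ws > 0 \<longrightarrow>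
        (\<forall>k<N. (state f x mu ws k, mu (take (Suc k) ws)) \<in> Y (ws ! k))
        \<and> state f x mu ws N = xs (bet (ws ! (N - 1))))"

definition cost ::
  "('q::finite \<Rightarrow> 'q \<Rightarrow> real) \<Rightarrow> ('x \<Rightarrow> 'u \<Rightarrow> 'q \<Rightarrow> 'x) \<Rightarrow> ('x \<Rightarrow> 'u \<Rightarrow> 'q \<Rightarrow> real)
   \<Rightarrow> nat \<Rightarrow> 'x \<Rightarrow> 'q \<Rightarrow> ('q list \<Rightarrow> 'u) \<Rightarrow> real" where
  "cost P f ell N x \<theta> mu =
     (\<Sum>ws\<in>paths \<theta> N. path_prob P ws *
        (\<Sum>k<N. ell (state f x mu ws k) (mu (take (Suc k) ws)) (ws ! k)))"

definition Vopt ::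
  "('q::finite \<Rightarrow> 'q \<Rightarrow> real) \<Rightarrow> ('x \<Rightarrow> 'u \<Rightarrow> 'q \<Rightarrow> 'x) \<Rightarrow> ('x \<Rightarrow> 'u \<Rightarrow> 'q \<Rightarrow> real)
   \<Rightarrow> ('q \<Rightarrow> ('x \<times> 'u) set) \<Rightarrow> ('q \<Rightarrow> 'q) \<Rightarrow> ('q \<Rightarrow> 'x) \<Rightarrow> nat \<Rightarrow> 'x \<Rightarrow> 'q \<Rightarrow> real" where
  "Vopt P f ell Y bet xs N x \<theta> =
     Inf {cost P f ell N x \<theta> mu | mu. feasible P f Y bet xs N x \<theta> mu}"

definition XN ::
  "('q \<Rightarrow> 'q \<Rightarrow> real) \<Rightarrow> ('x \<Rightarrow> 'u \<Rightarrow> 'q \<Rightarrow> 'x) \<Rightarrow> ('q \<Rightarrow> ('x \<times> 'u) set) \<Rightarrow> ('q \<Rightarrow> 'q)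
   \<Rightarrow> ('q \<Rightarrow> 'x) \<Rightarrow> nat \<Rightarrow> ('x \<times> 'q) set" where
  "XN P f Y bet xs N = {(x, \<theta>). \<exists>mu. feasible P f Y bet xs N x \<theta> mu}"

definition optimal_policy ::
  "('q::finite \<Rightarrow> 'q \<Rightarrow> real) \<Rightarrow> ('x \<Rightarrow> 'u \<Rightarrow> 'q \<Rightarrow> 'x) \<Rightarrow> ('x \<Rightarrow> 'u \<Rightarrow> 'q \<Rightarrow> real)
   \<Rightarrow> ('q \<Rightarrow> ('x \<times> 'u) set) \<Rightarrow> ('q \<Rightarrow> 'q) \<Rightarrow> ('q \<Rightarrow> 'x) \<Rightarrow> nat \<Rightarrow> 'x \<Rightarrow> 'q
   \<Rightarrow> ('q list \<Rightarrow> 'u) \<Rightarrow> bool" where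
  "optimal_policy P f ell Y bet xs N x \<theta> mu \<longleftrightarrow>
     feasible P f Y bet xs N x \<theta> mu \<and> cost P f ell N x \<theta> mu = Vopt P f ell Y bet xs N x \<theta>"

definition ellN ::
  "('q::finite \<Rightarrow> 'q \<Rightarrow> real) \<Rightarrow> ('x \<Rightarrow> 'u \<Rightarrow> 'q \<Rightarrow> real) \<Rightarrow> ('q \<Rightarrow> 'q) \<Rightarrow> ('q \<Rightarrow> 'x)
   \<Rightarrow> ('q \<Rightarrow> 'q \<Rightarrow> 'u) \<Rightarrow> nat \<Rightarrow> 'q \<Rightarrow> real" where
  "ellN P ell bet xs ubar N \<theta> =
     (\<Sum>ws\<in>paths \<theta> (Suc N). path_prob P ws *
        ell (xs (bet (ws ! (N - 1)))) (ubar (bet (ws ! (N - 1))) (ws ! N)) (ws ! N))"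

definition LV ::
  "('q::finite \<Rightarrow> 'q \<Rightarrow> real) \<Rightarrow> ('x \<Rightarrow> 'u \<Rightarrow> 'q \<Rightarrow> 'x) \<Rightarrow> ('x \<Rightarrow> 'q \<Rightarrow> real)
   \<Rightarrow> 'u \<Rightarrow> 'x \<Rightarrow> 'q \<Rightarrow> real" where
  "LV P f V kappa x \<theta> = (\<Sum>j\<in>UNIV. P \<theta> j * V (f x kappa \<theta>) j) - V x \<theta>"

end

theory Submission
  imports Defs
begin

text \<open>Shift the optimal policy from \<open>(x, \<theta>)\<close> by one step and complete it with the
  controllability input \<open>ubar\<close>, which keeps the state at the optimal steady state of the
  bet node. From every successor \<open>(f x (\<mu> [\<theta>]) \<theta>, j)\<close> with \<open>P \<theta> j > 0\<close> this candidate is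
  feasible, and along each mode path its cost is the optimal cost minus the first stage
  plus one extra stage at the steady state. Averaging over \<open>j\<close> bounds the expected optimal
  value at the successor.\<close>

lemma finite_paths: "finite (paths (\<theta>::'q::finite) n)"
proof (rule finite_subset)
  show "paths \<theta> n \<subseteq> {ws. set ws \<subseteq> UNIV \<and> length ws = n}" by (auto simp: paths_def)
  show "finite {ws. set ws \<subseteq> (UNIV::'q set) \<and> length ws = n}"
    by (rule finite_lists_length_eq) simp
qed

lemma path_prob_Cons: "ws \<noteq> [] \<Longrightarrow> path_prob P (a # ws) = P a (ws ! 0) * path_prob P ws"
  by (cases ws) (simp_all add: path_prob_def prod.lessThan_Suc_shift del: prod.lessThan_Suc)

lemma path_prob_snoc:
  assumes "ws \<noteq> []"
  shows "path_prob P (ws @ [a]) = path_prob P ws * P (last ws) a"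
proof -
  obtain m where m: "length ws = Suc m" using assms by (cases ws) auto
  have "(\<Prod>k<m. P ((ws @ [a]) ! k) ((ws @ [a]) ! Suc k)) = (\<Prod>k<m. P (ws ! k) (ws ! Suc k))"
    by (rule prod.cong) (auto simp: nth_append m)
  moreover have "(ws @ [a]) ! m = last ws" "(ws @ [a]) ! Suc m = a"
    using m assms by (simp_all add: nth_append last_conv_nth)
  ultimately show ?thesis by (simp add: path_prob_def m)
qed

lemma path_prob_nonneg: "(\<And>i j. 0 \<le> P i j) \<Longrightarrow> 0 \<le> path_prob P ws"
  by (simp add: path_prob_def prod_nonneg)

lemma path_prob_pos_iff:
  assumes "\<And>i j. 0 \<le> P i j"
  shows "0 < path_prob P ws \<longleftrightarrow> (\<forall>k < length ws - 1. 0 < P (ws ! k) (ws ! Suc k))"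
proof -
  have "path_prob P ws \<noteq> 0 \<longleftrightarrow> (\<forall>k < length ws - 1. P (ws ! k) (ws ! Suc k) \<noteq> 0)"
    by (auto simp: path_prob_def)
  then show ?thesis using assms path_prob_nonneg[of P ws] by (auto simp: less_le)
qed

lemma path_prob_take_pos:
  assumes "\<And>i j. 0 \<le> P i j" and "0 < path_prob P ws"
  shows "0 < path_prob P (take m ws)"
  using assms by (auto simp: path_prob_pos_iff)

lemma sum_paths_cong_pos:
  assumes "\<And>i j. 0 \<le> P i j"
    and "\<And>ws. ws \<in> A \<Longrightarrow> 0 < path_prob P ws \<Longrightarrow> g ws = h ws"
  shows "(\<Sum>ws\<in>A. path_prob P ws * g ws) = (\<Sum>ws\<in>A. path_prob P ws * h ws)"
proof (rule sum.cong[OF refl])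
  fix ws assume "ws \<in> A"
  then show "path_prob P ws * g ws = path_prob P ws * h ws"
    using assms path_prob_nonneg[of P ws] by (cases "path_prob P ws = 0") auto
qed

lemma paths_Suc_eq_Cons_image:
  assumes "n \<ge> 1"
  shows "paths \<theta> (Suc n) = (\<lambda>(j, ws). \<theta> # ws) ` (SIGMA j:UNIV. paths j n)"
proof (intro equalityI subsetI)
  fix ws assume "ws \<in> paths \<theta> (Suc n)"
  then obtain r where "ws = \<theta> # r" "length r = n" by (cases ws) (auto simp: paths_def)
  moreover have "(r ! 0, r) \<in> (SIGMA j:UNIV. paths j n)" using \<open>length r = n\<close>
    by (simp add: paths_def)
  ultimately show "ws \<in> (\<lambda>(j, ws). \<theta> # ws) ` (SIGMA j:UNIV. paths j n)" by force
qed (use assms in \<open>auto simp: paths_def\<close>)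

lemma sum_paths_Suc_Cons:
  assumes "n \<ge> 1"
  shows "(\<Sum>ws\<in>paths (\<theta>::'q::finite) (Suc n). path_prob P ws * g ws)
       = (\<Sum>j\<in>UNIV. P \<theta> j * (\<Sum>ws\<in>paths j n. path_prob P ws * g (\<theta> # ws)))"
proof -
  have inj: "inj_on (\<lambda>(j, ws). \<theta> # ws) (SIGMA j:UNIV. paths (j::'q) n)"
    by (auto simp: inj_on_def paths_def)
  have "(\<Sum>ws\<in>paths \<theta> (Suc n). path_prob P ws * g ws)
      = (\<Sum>j\<in>UNIV. \<Sum>ws\<in>paths j n. path_prob P (\<theta> # ws) * g (\<theta> # ws))"
    unfolding paths_Suc_eq_Cons_image[OF assms] sum.reindex[OF inj]
    by (simp add: sum.Sigma finite_paths case_prod_beta)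
  also have "\<dots> = (\<Sum>j\<in>UNIV. \<Sum>ws\<in>paths j n. P \<theta> j * (path_prob P ws * g (\<theta> # ws)))"
  proof (intro sum.cong refl)
    fix j :: 'q and ws :: "'q list" assume "ws \<in> paths j n"
    then have "ws \<noteq> []" and "ws ! 0 = j" using assms by (auto simp: paths_def)
    then show "path_prob P (\<theta> # ws) * g (\<theta> # ws) = P \<theta> j * (path_prob P ws * g (\<theta> # ws))"
      by (simp add: path_prob_Cons)
  qed
  finally show ?thesis by (simp add: sum_distrib_left)
qed

lemma paths_Suc_eq_snoc_image:
  assumes "m \<ge> 1"
  shows "paths \<theta> (Suc m) = (\<lambda>(ws, a). ws @ [a]) ` (paths \<theta> m \<times> UNIV)"
proof (intro equalityI subsetI)
  fix ws assume ws: "ws \<in> paths \<theta> (Suc m)"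
  then have "ws \<noteq> []" by (auto simp: paths_def)
  then have "ws = butlast ws @ [last ws]" by simp
  moreover have "(butlast ws, last ws) \<in> paths \<theta> m \<times> UNIV"
    using ws assms by (auto simp: paths_def nth_butlast)
  ultimately show "ws \<in> (\<lambda>(ws, a). ws @ [a]) ` (paths \<theta> m \<times> UNIV)" by force
qed (use assms in \<open>auto simp: paths_def nth_append\<close>)

lemma sum_paths_Suc_snoc:
  assumes "m \<ge> 1" and "stochastic_matrix P"
  shows "(\<Sum>ws\<in>paths (\<theta>::'q::finite) (Suc m). path_prob P ws * h (take m ws))
       = (\<Sum>ws\<in>paths \<theta> m. path_prob P ws * h ws)"
proof -
  have inj: "inj_on (\<lambda>(ws, a). ws @ [a]) (paths \<theta> m \<times> (UNIV::'q set))"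
    by (auto simp: inj_on_def paths_def)
  have "(\<Sum>ws\<in>paths \<theta> (Suc m). path_prob P ws * h (take m ws))
      = (\<Sum>ws\<in>paths \<theta> m. \<Sum>a\<in>UNIV. path_prob P (ws @ [a]) * h (take m (ws @ [a])))"
    unfolding paths_Suc_eq_snoc_image[OF assms(1)] sum.reindex[OF inj]
    by (simp add: sum.cartesian_product case_prod_beta)
  also have "\<dots> = (\<Sum>ws\<in>paths \<theta> m. path_prob P ws * h ws * (\<Sum>a\<in>UNIV. P (last ws) a))"
  proof (intro sum.cong refl)
    fix ws assume "ws \<in> paths \<theta> m"
    then have "ws \<noteq> []" and "length ws = m" using assms(1) by (auto simp: paths_def)
    then show "(\<Sum>a\<in>UNIV. path_prob P (ws @ [a]) * h (take m (ws @ [a])))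
        = path_prob P ws * h ws * (\<Sum>a\<in>UNIV. P (last ws) a)"
      by (simp add: path_prob_snoc sum_distrib_left mult_ac)
  qed
  finally show ?thesis using assms(2) by (simp add: stochastic_matrix_def)
qed

lemma sum_path_prob_eq_1:
  assumes "m \<ge> 1" and "stochastic_matrix P"
  shows "(\<Sum>ws\<in>paths (\<theta>::'q::finite) m. path_prob P ws) = 1"
  using assms(1)
proof (induction m rule: dec_induct)
  case base
  have "paths \<theta> 1 = {[\<theta>]}"
    by (auto simp: paths_def length_Suc_conv)
  then show ?case by (simp add: path_prob_def)
next
  case (step m)
  then show ?case using sum_paths_Suc_snoc[OF step(1) assms(2), where h = "\<lambda>_. 1"] by simp
qed

lemma state_take: "k \<le> m \<Longrightarrow> state f x \<mu> (take m ws) k = state f x \<mu> ws k"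
  by (induction k) (simp_all add: min_absorb1)

lemma state_Cons_shift:
  assumes "\<And>h. length h \<le> n \<Longrightarrow> \<mu>' h = \<mu> (\<theta> # h)"
  shows "k \<le> n \<Longrightarrow> state f (f x (\<mu> [\<theta>]) \<theta>) \<mu>' ws k = state f x \<mu> (\<theta> # ws) (Suc k)"
  by (induction k) (simp_all add: assms)

definition path_cost ::
  "('x \<Rightarrow> 'u \<Rightarrow> 'q \<Rightarrow> 'x) \<Rightarrow> ('x \<Rightarrow> 'u \<Rightarrow> 'q \<Rightarrow> real) \<Rightarrow> nat \<Rightarrow> 'x \<Rightarrow> ('q list \<Rightarrow> 'u)
   \<Rightarrow> 'q list \<Rightarrow> real" where
  "path_cost f ell N x \<mu> ws = (\<Sum>k<N. ell (state f x \<mu> ws k) (\<mu> (take (Suc k) ws)) (ws ! k))"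

lemma cost_eq_sum_path_cost:
  "cost P f ell N x \<theta> \<mu> = (\<Sum>ws\<in>paths \<theta> N. path_prob P ws * path_cost f ell N x \<mu> ws)"
  by (simp add: cost_def path_cost_def)

lemma path_cost_take: "path_cost f ell N x \<mu> (take N ws) = path_cost f ell N x \<mu> ws"
  by (auto simp: path_cost_def state_take min_absorb1 intro!: sum.cong)

lemma path_cost_Cons_shift:
  assumes "\<And>h. length h \<le> n \<Longrightarrow> \<mu>' h = \<mu> (\<theta> # h)"
  shows "path_cost f ell (Suc n) (f x (\<mu> [\<theta>]) \<theta>) \<mu>' ws
       = path_cost f ell (Suc n) x \<mu> (\<theta> # ws) - ell x (\<mu> [\<theta>]) \<theta>
         + ell (state f x \<mu> (\<theta> # ws) (Suc n)) (\<mu>' (take (Suc n) ws)) (ws ! n)"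
proof -
  note shift = state_Cons_shift[of n \<mu>' \<mu> \<theta>, OF assms]
  define stage where "stage k = ell (state f x \<mu> (\<theta> # ws) k) (\<mu> (take (Suc k) (\<theta> # ws)))
    ((\<theta> # ws) ! k)" for k
  have "path_cost f ell (Suc n) (f x (\<mu> [\<theta>]) \<theta>) \<mu>' ws
      = (\<Sum>k<n. stage (Suc k)) + ell (state f x \<mu> (\<theta> # ws) (Suc n)) (\<mu>' (take (Suc n) ws)) (ws ! n)"
    by (simp add: path_cost_def stage_def shift assms del: state.simps(2))
  moreover have "path_cost f ell (Suc n) x \<mu> (\<theta> # ws) = ell x (\<mu> [\<theta>]) \<theta> + (\<Sum>k<n. stage (Suc k))"
    by (simp add: path_cost_def stage_def sum.lessThan_Suc_shift del: sum.lessThan_Suc)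
  ultimately show ?thesis by simp
qed

lemma Vopt_le_cost:
  assumes "\<And>i j. 0 \<le> P i j" and "\<And>x u q. 0 \<le> ell x u q"
    and "feasible P f Y bet xs N x \<theta> \<mu>"
  shows "Vopt P f ell Y bet xs N x \<theta> \<le> cost P f ell N x \<theta> \<mu>"
proof -
  have "\<And>\<mu>. 0 \<le> cost P f ell N x \<theta> \<mu>"
    unfolding cost_def using assms(1,2)
    by (intro sum_nonneg mult_nonneg_nonneg path_prob_nonneg) simp_all
  then show ?thesis
    unfolding Vopt_def using assms(3) by (intro cInf_lower) (auto intro: bdd_belowI[where m = 0])
qed

lemma feasible_on_extension:
  assumes "\<And>i j. 0 \<le> P i j" and "feasible P f Y bet xs (Suc n) x \<theta> \<mu>"
    and "ws \<in> paths \<theta> (Suc (Suc n))" and "0 < path_prob P ws"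
  shows "\<forall>k<Suc n. (state f x \<mu> ws k, \<mu> (take (Suc k) ws)) \<in> Y (ws ! k)"
    and "state f x \<mu> ws (Suc n) = xs (bet (ws ! n))"
proof -
  have "take (Suc n) ws \<in> paths \<theta> (Suc n)" and "0 < path_prob P (take (Suc n) ws)"
    using assms(3) path_prob_take_pos[OF assms(1,4)] by (auto simp: paths_def)
  with assms(2) show "\<forall>k<Suc n. (state f x \<mu> ws k, \<mu> (take (Suc k) ws)) \<in> Y (ws ! k)"
    and "state f x \<mu> ws (Suc n) = xs (bet (ws ! n))"
    by (auto simp: feasible_def state_take)
qed

text \<open>At the new last stage, \<open>(\<theta> # h) ! n\<close> is the last mode of the original horizon, after
  which \<open>\<mu>\<close> has reached the steady state of its bet node.\<close>

definition shifted_policy ::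
  "('q \<Rightarrow> 'q) \<Rightarrow> ('q \<Rightarrow> 'q \<Rightarrow> 'u) \<Rightarrow> nat \<Rightarrow> 'q \<Rightarrow> ('q list \<Rightarrow> 'u) \<Rightarrow> 'q list \<Rightarrow> 'u" where
  "shifted_policy bet ubar n \<theta> \<mu> h =
     (if length h \<le> n then \<mu> (\<theta> # h) else ubar (bet ((\<theta> # h) ! n)) (h ! n))"

lemma shifted_policy_prefix:
  "length h \<le> n \<Longrightarrow> shifted_policy bet ubar n \<theta> \<mu> h = \<mu> (\<theta> # h)"
  by (simp add: shifted_policy_def)

lemma shifted_policy_last:
  "length ws = Suc n \<Longrightarrow> shifted_policy bet ubar n \<theta> \<mu> ws = ubar (bet ((\<theta> # ws) ! n)) (ws ! n)"
  by (simp add: shifted_policy_def)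

lemma path_cost_shifted_policy:
  assumes "\<And>i j. 0 \<le> P i j" and "feasible P f Y bet xs (Suc n) x \<theta> \<mu>"
    and "length ws = Suc n" and "0 < path_prob P (\<theta> # ws)"
  shows "path_cost f ell (Suc n) (f x (\<mu> [\<theta>]) \<theta>) (shifted_policy bet ubar n \<theta> \<mu>) ws
       = path_cost f ell (Suc n) x \<mu> (\<theta> # ws) - ell x (\<mu> [\<theta>]) \<theta>
         + ell (xs (bet ((\<theta> # ws) ! n))) (ubar (bet ((\<theta> # ws) ! n)) (ws ! n)) (ws ! n)"
proof -
  have "\<theta> # ws \<in> paths \<theta> (Suc (Suc n))" using assms(3) by (simp add: paths_def)
  then have "state f x \<mu> (\<theta> # ws) (Suc n) = xs (bet ((\<theta> # ws) ! n))"
    by (rule feasible_on_extension(2)[OF assms(1,2) _ assms(4)])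
  with assms(3) show ?thesis
    by (simp add: path_cost_Cons_shift[of n "shifted_policy bet ubar n \<theta> \<mu>", OF shifted_policy_prefix]
        shifted_policy_last del: state.simps)
qed

lemma feasible_shifted_policy:
  assumes "\<And>i j. 0 \<le> P i j" and "controllable f Y bet xs ubar"
    and "feasible P f Y bet xs (Suc n) x \<theta> \<mu>" and "0 < P \<theta> j"
  shows "feasible P f Y bet xs (Suc n) (f x (\<mu> [\<theta>]) \<theta>) j (shifted_policy bet ubar n \<theta> \<mu>)"
proof -
  let ?x1 = "f x (\<mu> [\<theta>]) \<theta>" and ?\<mu>' = "shifted_policy bet ubar n \<theta> \<mu>"
  have "(\<forall>k<Suc n. (state f ?x1 ?\<mu>' ws k, ?\<mu>' (take (Suc k) ws)) \<in> Y (ws ! k))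
        \<and> state f ?x1 ?\<mu>' ws (Suc n) = xs (bet (ws ! n))"
    if ws: "ws \<in> paths j (Suc n)" and pos: "0 < path_prob P ws" for ws
  proof -
    have len: "length ws = Suc n" and hd: "ws ! 0 = j" using ws by (auto simp: paths_def)
    have ext: "\<theta> # ws \<in> paths \<theta> (Suc (Suc n))" using len by (simp add: paths_def)
    have "path_prob P (\<theta> # ws) = P \<theta> j * path_prob P ws"
      using len hd by (subst path_prob_Cons) auto
    then have "0 < path_prob P (\<theta> # ws)" using pos assms(4) by simp
    note stages = feasible_on_extension(1)[OF assms(1,3) ext this]
      and terminal = feasible_on_extension(2)[OF assms(1,3) ext this]
    have state: "state f ?x1 ?\<mu>' ws k = state f x \<mu> (\<theta> # ws) (Suc k)" if "k \<le> n" for k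
      using state_Cons_shift[OF shifted_policy_prefix that] .
    have early: "(state f ?x1 ?\<mu>' ws k, ?\<mu>' (take (Suc k) ws)) \<in> Y (ws ! k)" if "k < n" for k
      using stages[rule_format, of "Suc k"] that by (simp add: state shifted_policy_prefix)
    have "state f ?x1 ?\<mu>' ws n = xs (bet ((\<theta> # ws) ! n))"
      using state[of n] terminal by simp
    moreover have "?\<mu>' (take (Suc n) ws) = ubar (bet ((\<theta> # ws) ! n)) (ws ! n)"
      using len by (simp add: shifted_policy_last)
    ultimately have "(state f ?x1 ?\<mu>' ws n, ?\<mu>' (take (Suc n) ws)) \<in> Y (ws ! n)"
      and "state f ?x1 ?\<mu>' ws (Suc n) = xs (bet (ws ! n))"
      using assms(2) by (simp_all add: controllable_def)
    with early show ?thesis by (auto simp: less_Suc_eq)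
  qed
  then show ?thesis by (simp add: feasible_def)
qed

lemma expected_Vopt_successor_le:
  assumes "stochastic_matrix P" and "\<And>x u q. 0 \<le> ell x u q"
    and "controllable f Y bet xs ubar" and "feasible P f Y bet xs (Suc n) x \<theta> \<mu>"
  shows "(\<Sum>j\<in>UNIV. P \<theta> j * Vopt P f ell Y bet xs (Suc n) (f x (\<mu> [\<theta>]) \<theta>) j)
       \<le> cost P f ell (Suc n) x \<theta> \<mu> - ell x (\<mu> [\<theta>]) \<theta> + ellN P ell bet xs ubar (Suc n) \<theta>"
proof -
  let ?x1 = "f x (\<mu> [\<theta>]) \<theta>" and ?\<mu>' = "shifted_policy bet ubar n \<theta> \<mu>"
  have P_nonneg: "\<And>i j. 0 \<le> P i j" using assms(1) by (simp add: stochastic_matrix_def)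
  define terminal where "terminal ws = ell (xs (bet (ws ! n))) (ubar (bet (ws ! n)) (ws ! Suc n))
    (ws ! Suc n)" for ws
  have "P \<theta> j * Vopt P f ell Y bet xs (Suc n) ?x1 j \<le> P \<theta> j * cost P f ell (Suc n) ?x1 j ?\<mu>'"
    for j
  proof (cases "P \<theta> j = 0")
    case False
    then have "0 < P \<theta> j" using P_nonneg by (simp add: less_le)
    from Vopt_le_cost[OF P_nonneg assms(2) feasible_shifted_policy[OF P_nonneg assms(3,4) this]]
      this show ?thesis by simp
  qed simp
  then have "(\<Sum>j\<in>UNIV. P \<theta> j * Vopt P f ell Y bet xs (Suc n) ?x1 j)
      \<le> (\<Sum>j\<in>UNIV. P \<theta> j * cost P f ell (Suc n) ?x1 j ?\<mu>')"
    by (rule sum_mono)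
  also have "\<dots> = (\<Sum>ws\<in>paths \<theta> (Suc (Suc n)).
      path_prob P ws * path_cost f ell (Suc n) ?x1 ?\<mu>' (tl ws))"
    by (simp add: sum_paths_Suc_Cons cost_eq_sum_path_cost)
  also have "\<dots> = (\<Sum>ws\<in>paths \<theta> (Suc (Suc n)). path_prob P ws *
      (path_cost f ell (Suc n) x \<mu> (take (Suc n) ws) - ell x (\<mu> [\<theta>]) \<theta> + terminal ws))"
  proof (rule sum_paths_cong_pos[OF P_nonneg])
    fix ws assume ws: "ws \<in> paths \<theta> (Suc (Suc n))" and pos: "0 < path_prob P ws"
    then have "ws = \<theta> # tl ws" and "length (tl ws) = Suc n"
      by (cases ws; simp add: paths_def)+
    with pos path_cost_shifted_policy[OF P_nonneg assms(4), of "tl ws" ell ubar] show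
      "path_cost f ell (Suc n) ?x1 ?\<mu>' (tl ws)
       = path_cost f ell (Suc n) x \<mu> (take (Suc n) ws) - ell x (\<mu> [\<theta>]) \<theta> + terminal ws"
      by (metis path_cost_take terminal_def nth_Cons_Suc)
  qed
  also have "\<dots> = (\<Sum>ws\<in>paths \<theta> (Suc (Suc n)).
        path_prob P ws * path_cost f ell (Suc n) x \<mu> (take (Suc n) ws))
      - ell x (\<mu> [\<theta>]) \<theta> * (\<Sum>ws\<in>paths \<theta> (Suc (Suc n)). path_prob P ws)
      + (\<Sum>ws\<in>paths \<theta> (Suc (Suc n)). path_prob P ws * terminal ws)"
    by (simp add: algebra_simps sum.distrib sum_subtractf sum_distrib_left)
  also have "\<dots> = cost P f ell (Suc n) x \<theta> \<mu> - ell x (\<mu> [\<theta>]) \<theta> + ellN P ell bet xs ubar (Suc n) \<theta>"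
    by (simp add: sum_paths_Suc_snoc[OF _ assms(1)] sum_path_prob_eq_1[OF _ assms(1)]
        cost_eq_sum_path_cost ellN_def terminal_def)
  finally show ?thesis .
qed

theorem lemma1:
  fixes P :: "'q::finite \<Rightarrow> 'q \<Rightarrow> real"
    and f :: "real^'n \<Rightarrow> real^'m \<Rightarrow> 'q \<Rightarrow> real^'n"
    and ell :: "real^'n \<Rightarrow> real^'m \<Rightarrow> 'q \<Rightarrow> real"
    and Y :: "'q \<Rightarrow> ((real^'n) \<times> (real^'m)) set"
    and bet :: "'q \<Rightarrow> 'q"
    and xs :: "'q \<Rightarrow> real^'n" and us :: "'q \<Rightarrow> real^'m"
    and ubar :: "'q \<Rightarrow> 'q \<Rightarrow> real^'m"
    and N :: nat
  assumes "stochastic_matrix P"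
    and "well_posed P f ell Y"
    and "is_bet P bet"
    and "optimal_steady_states f ell Y xs us"
    and "controllable f Y bet xs ubar"
    and "N \<ge> 1"
    and "(x, \<theta>) \<in> XN P f Y bet xs N"
    and "optimal_policy P f ell Y bet xs N x \<theta> mu"
  shows "LV P f (Vopt P f ell Y bet xs N) (mu [\<theta>]) x \<theta>
           \<le> ellN P ell bet xs ubar N \<theta> - ell x (mu [\<theta>]) \<theta>"
proof -
  obtain n where N: "N = Suc n" using assms(6) by (cases N) auto
  have ell_nonneg: "\<And>x u q. 0 \<le> ell x u q" using assms(2) by (simp add: well_posed_def)
  have feasible: "feasible P f Y bet xs N x \<theta> mu"
    and optimal: "Vopt P f ell Y bet xs N x \<theta> = cost P f ell N x \<theta> mu"
    using assms(8) by (simp_all add: optimal_policy_def)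
  have "(\<Sum>j\<in>UNIV. P \<theta> j * Vopt P f ell Y bet xs N (f x (mu [\<theta>]) \<theta>) j)
      \<le> cost P f ell N x \<theta> mu - ell x (mu [\<theta>]) \<theta> + ellN P ell bet xs ubar N \<theta>"
    unfolding N using assms(1) ell_nonneg assms(5) feasible[unfolded N]
    by (rule expected_Vopt_successor_le)
  with optimal show ?thesis by (simp add: LV_def)
qed

end
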